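(* Let $d\ge1$, $\alpha\in(0,2)$, and let $D\subset\mathbb{R}^d$ be a Borel set. For every $\gamma\in[0,\alpha)$ there exists a constant $C_2=C_2(d,\alpha,\gamma)>0$ such that for all $(t,x,y,z)\in(0,\infty)\times D\times D\times D$, $$\int_0^t\frac{\psi_\gamma(t-s,x,z)q(t-s,x,z)\psi_\gamma(s,z,y)q(s,z,y)}{\psi_\gamma(t,x,y)q(t,x,y)}\,ds\le C_2\int_0^t\Big(1\wedge\frac{\delta_D(z)}{s^{1/\alpha}}\Big)^\gamma\big(q(s,x,z)+q(s,z,y)\big)\,ds.$$
   Context: $\delta_D(x)$ is the Euclidean distance from $x$ to $D^c$; $q(t,x,y):=t^{-d/\alpha}\wedge\frac{t}{|x-y|^{d+\alpha}}$; $\psi_\gamma(t,x,y):=\big(1\wedge\frac{\delta_D(x)}{t^{1/\alpha}}\big)^\gamma\big(1\wedge\frac{\delta_D(y)}{t^{1/\alpha}}\big)^\gamma$. *)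

theory Defs
  imports "HOL-Analysis.Analysis"
begin

text \<open>Real power with the mathematical convention 0^0 = 1 (Isabelle's powr has 0 powr 0 = 0).\<close>
definition rpow :: "real \<Rightarrow> real \<Rightarrow> real" where
  "rpow a g = (if a = 0 then (if g = 0 then 1 else 0) else a powr g)"

text \<open>The factor 1 \<and> delta_D(x)/t^(1/alpha); if D^c is empty, delta_D = +infinity and the factor is 1.\<close>
definition bfac :: "real \<Rightarrow> 'a::euclidean_space set \<Rightarrow> real \<Rightarrow> 'a \<Rightarrow> real" where
  "bfac \<alpha> D t x = (if - D = {} then 1 else min 1 (infdist x (- D) / t powr (1 / \<alpha>)))"

text \<open>q(t,x,y) = t^(-d/alpha) \<and> t/|x-y|^(d+alpha), with d = DIM('a); for x = y the second term is +infinity.\<close>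
definition qk :: "real \<Rightarrow> real \<Rightarrow> 'a::euclidean_space \<Rightarrow> 'a \<Rightarrow> real" where
  "qk \<alpha> t x y = (if x = y then t powr (- real DIM('a) / \<alpha>)
     else min (t powr (- real DIM('a) / \<alpha>)) (t / norm (x - y) powr (real DIM('a) + \<alpha>)))"

definition psi :: "real \<Rightarrow> 'a::euclidean_space set \<Rightarrow> real \<Rightarrow> real \<Rightarrow> 'a \<Rightarrow> 'a \<Rightarrow> real" where
  "psi \<alpha> D \<gamma> t x y = rpow (bfac \<alpha> D t x) \<gamma> * rpow (bfac \<alpha> D t y) \<gamma>"

end

theory Submission
  imports Defs
begin

text \<open>
  Splitting (0,t) at t/2 and using the symmetry s \<mapsto> t - s, x \<leftrightarrow> y, it suffices to consider
  s \<le> t/2. The boundary factors of x at times t - s and t are then comparable, and either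
  q(t-s,x,z) \<le> c q(t,x,y), or z is far from y and q(s,z,y) \<le> c (s/t) q(t,x,y).
  In the second case the gain s/t absorbs the loss (t/s)^(\<gamma>/\<alpha>) from moving the boundary
  factor of y from time s to time t, because \<gamma> \<le> \<alpha>. In the first case that factor is
  moved instead with the Lipschitz bound |\<delta>_D(z) - \<delta>_D(y)| \<le> |z - y|, which costs
  (M/s)^(\<gamma>/\<alpha>) only for s < M = |z - y|^\<alpha> \<and> t. On (0,M) the kernel q(s,z,y) is s/|z-y|^(d+\<alpha>),
  so for \<gamma> < \<alpha> this extra term integrates to a multiple of the integral of
  (1 \<and> \<delta>_D(z)/s^(1/\<alpha>))^\<gamma> q(s,z,y) over (M/2,M).
\<close>

lemma rpow_eq_if: "rpow a g = (if g = 0 then 1 else a powr g)"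
  unfolding rpow_def by auto

lemma rpow_nonneg: "0 \<le> rpow a g"
  by (simp add: rpow_eq_if)

lemma rpow_eq_powr: "0 < a \<Longrightarrow> rpow a g = a powr g"
  by (simp add: rpow_eq_if)

lemma rpow_mono: "0 \<le> a \<Longrightarrow> a \<le> b \<Longrightarrow> 0 \<le> g \<Longrightarrow> rpow a g \<le> rpow b g"
  by (simp add: rpow_eq_if powr_mono2)

lemma rpow_mult: "0 \<le> a \<Longrightarrow> 0 \<le> b \<Longrightarrow> rpow (a * b) g = rpow a g * rpow b g"
  by (simp add: rpow_eq_if powr_mult)

lemma rpow_le_one: "0 \<le> a \<Longrightarrow> a \<le> 1 \<Longrightarrow> 0 \<le> g \<Longrightarrow> rpow a g \<le> 1"
  using powr_mono2[of g a 1] by (simp add: rpow_eq_if)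

lemma borel_measurable_rpow [measurable]:
  "f \<in> borel_measurable M \<Longrightarrow> (\<lambda>s. rpow (f s) g) \<in> borel_measurable M"
  by (cases "g = 0") (simp_all add: rpow_eq_if)

lemma bfac_nonneg: "0 \<le> bfac \<alpha> D s w"
  unfolding bfac_def by (auto simp: infdist_nonneg)

lemma bfac_le_one: "bfac \<alpha> D s w \<le> 1"
  unfolding bfac_def by auto

lemma borel_measurable_bfac [measurable]: "(\<lambda>s. bfac \<alpha> D s w) \<in> borel_measurable borel"
  unfolding bfac_def by measurable

lemma bfac_le_scaled:
  assumes "0 < \<alpha>" "0 < s" "s \<le> s'"
  shows "bfac \<alpha> D s w \<le> (s' / s) powr (1 / \<alpha>) * bfac \<alpha> D s' w"
proof -
  have one: "1 \<le> (s' / s) powr (1 / \<alpha>)"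
    using assms by (intro ge_one_powr_ge_zero) auto
  have "(s' / s) powr (1 / \<alpha>) * (infdist w (- D) / s' powr (1 / \<alpha>))
      = infdist w (- D) / s powr (1 / \<alpha>)"
    using assms by (simp add: powr_divide field_simps)
  then show ?thesis
    using one by (simp add: bfac_def min_mult_distrib_left min_def)
qed

lemma bfac_antimono:
  assumes "0 < \<alpha>" "0 < s" "s \<le> s'"
  shows "bfac \<alpha> D s' w \<le> bfac \<alpha> D s w"
proof -
  have "infdist w (- D) / s' powr (1 / \<alpha>) \<le> infdist w (- D) / s powr (1 / \<alpha>)"
    using assms by (intro divide_left_mono powr_mono2) (auto simp: infdist_nonneg)
  then show ?thesis unfolding bfac_def by auto
qed

lemma bfac_lipschitz:
  assumes "0 < \<alpha>" "0 < s"
  shows "bfac \<alpha> D s w \<le> bfac \<alpha> D s w' + norm (w - w') / s powr (1 / \<alpha>)"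
proof (cases "- D = {}")
  case False
  have "infdist w (- D) \<le> infdist w' (- D) + norm (w - w')"
    using infdist_triangle[of w "- D" w'] by (simp add: dist_norm)
  then have "infdist w (- D) / s powr (1 / \<alpha>)
      \<le> infdist w' (- D) / s powr (1 / \<alpha>) + norm (w - w') / s powr (1 / \<alpha>)"
    using assms by (simp add: divide_right_mono flip: add_divide_distrib)
  moreover have "0 \<le> norm (w - w') / s powr (1 / \<alpha>)" by simp
  ultimately show ?thesis
    using False unfolding bfac_def min_def by (smt (verit))
qed (use assms in \<open>simp add: bfac_def\<close>)

lemma rpow_bfac_le_one: "0 \<le> \<gamma> \<Longrightarrow> rpow (bfac \<alpha> D s w) \<gamma> \<le> 1"
  by (intro rpow_le_one bfac_nonneg bfac_le_one)

lemma rpow_bfac_antimono: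
  "0 < \<alpha> \<Longrightarrow> 0 < s \<Longrightarrow> s \<le> s' \<Longrightarrow> 0 \<le> \<gamma> \<Longrightarrow>
    rpow (bfac \<alpha> D s' w) \<gamma> \<le> rpow (bfac \<alpha> D s w) \<gamma>"
  by (intro rpow_mono bfac_nonneg bfac_antimono)

lemma rpow_bfac_le_scaled:
  assumes "0 < \<alpha>" "0 < s" "s \<le> s'" "0 \<le> \<gamma>"
  shows "rpow (bfac \<alpha> D s w) \<gamma> \<le> (s' / s) powr (\<gamma> / \<alpha>) * rpow (bfac \<alpha> D s' w) \<gamma>"
proof -
  have pos: "0 < (s' / s) powr (1 / \<alpha>)" using assms by auto
  have "rpow (bfac \<alpha> D s w) \<gamma> \<le> rpow ((s' / s) powr (1 / \<alpha>) * bfac \<alpha> D s' w) \<gamma>"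
    by (intro rpow_mono bfac_nonneg bfac_le_scaled assms)
  also have "\<dots> = (s' / s) powr (\<gamma> / \<alpha>) * rpow (bfac \<alpha> D s' w) \<gamma>"
    using pos by (simp add: rpow_mult bfac_nonneg rpow_eq_powr powr_powr)
  finally show ?thesis .
qed

lemma jump_kernel_eq:
  fixes \<alpha> t r n :: real
  assumes "0 < \<alpha>" "0 < t" "0 < r"
  shows "t / r powr (n + \<alpha>) = t powr (- n / \<alpha>) * (t / r powr \<alpha>) powr ((n + \<alpha>) / \<alpha>)"
proof -
  have "t powr (- n / \<alpha>) * t powr ((n + \<alpha>) / \<alpha>) = t"
    using assms by (simp add: add_divide_distrib flip: powr_add)
  moreover have "(r powr \<alpha>) powr ((n + \<alpha>) / \<alpha>) = r powr (n + \<alpha>)"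
    using assms by (simp add: powr_powr)
  ultimately show ?thesis
    using assms by (simp add: powr_divide)
qed

lemma powr_le_jump_kernel:
  fixes \<alpha> t r n :: real
  assumes "0 < \<alpha>" "0 < t" "0 < r" "0 \<le> n" "r powr \<alpha> \<le> t"
  shows "t powr (- n / \<alpha>) \<le> t / r powr (n + \<alpha>)"
proof -
  have "1 \<le> (t / r powr \<alpha>) powr ((n + \<alpha>) / \<alpha>)"
    using assms by (intro ge_one_powr_ge_zero) auto
  then show ?thesis
    unfolding jump_kernel_eq[OF assms(1-3)] using assms by simp
qed

lemma jump_kernel_le_powr:
  fixes \<alpha> t r n :: real
  assumes "0 < \<alpha>" "0 < t" "0 < r" "0 \<le> n" "t \<le> r powr \<alpha>"
  shows "t / r powr (n + \<alpha>) \<le> t powr (- n / \<alpha>)"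
proof -
  have "(t / r powr \<alpha>) powr ((n + \<alpha>) / \<alpha>) \<le> 1"
    using assms by (intro powr_le1) auto
  then show ?thesis
    unfolding jump_kernel_eq[OF assms(1-3)] using assms by simp
qed

lemma qk_pos: "0 < t \<Longrightarrow> 0 < qk \<alpha> t x y" for x y :: "'a::euclidean_space"
  unfolding qk_def by auto

lemma qk_le_powr: "qk \<alpha> t x y \<le> t powr (- real DIM('a) / \<alpha>)" for x y :: "'a::euclidean_space"
  unfolding qk_def by auto

lemma qk_le_jump: "x \<noteq> y \<Longrightarrow> qk \<alpha> t x y \<le> t / norm (x - y) powr (real DIM('a) + \<alpha>)"
  for x y :: "'a::euclidean_space"
  unfolding qk_def by auto

lemma qk_commute: "qk \<alpha> t x y = qk \<alpha> t y x" for x y :: "'a::euclidean_space"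
  unfolding qk_def by (auto simp: norm_minus_commute)

lemma borel_measurable_qk [measurable]:
  "(\<lambda>s. qk \<alpha> s x y) \<in> borel_measurable borel" for x y :: "'a::euclidean_space"
  unfolding qk_def by measurable

lemma qk_eq_powr:
  fixes x y :: "'a::euclidean_space"
  assumes "0 < \<alpha>" "0 < t" "norm (x - y) powr \<alpha> \<le> t"
  shows "qk \<alpha> t x y = t powr (- real DIM('a) / \<alpha>)"
  using powr_le_jump_kernel[OF assms(1,2) _ _ assms(3), of "real DIM('a)"]
  unfolding qk_def by (auto simp: min_def)

lemma qk_eq_jump:
  fixes x y :: "'a::euclidean_space"
  assumes "0 < \<alpha>" "0 < t" "x \<noteq> y" "t \<le> norm (x - y) powr \<alpha>"
  shows "qk \<alpha> t x y = t / norm (x - y) powr (real DIM('a) + \<alpha>)"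
  using jump_kernel_le_powr[OF assms(1,2) _ _ assms(4), of "real DIM('a)"] assms(3)
  unfolding qk_def by (auto simp: min_def)

lemma qk_le_far:
  fixes x z :: "'a::euclidean_space"
  assumes "0 < \<alpha>" "0 \<le> u" "0 < \<rho>" "\<rho> \<le> 2 * norm (x - z)"
  shows "qk \<alpha> u x z \<le> 2 powr (real DIM('a) + \<alpha>) * (u / \<rho> powr (real DIM('a) + \<alpha>))"
proof -
  have "x \<noteq> z" using assms by auto
  then have "qk \<alpha> u x z \<le> u / norm (x - z) powr (real DIM('a) + \<alpha>)"
    by (rule qk_le_jump)
  also have "\<dots> \<le> u / (\<rho> / 2) powr (real DIM('a) + \<alpha>)"
    using assms by (intro divide_left_mono powr_mono2 mult_pos_pos) auto
  also have "\<dots> = 2 powr (real DIM('a) + \<alpha>) * (u / \<rho> powr (real DIM('a) + \<alpha>))"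
    using assms by (simp add: powr_divide)
  finally show ?thesis .
qed

lemma qk_le_earlier_powr:
  fixes x z :: "'a::euclidean_space"
  assumes "0 < \<alpha>" "0 < t" "t \<le> 2 * u"
  shows "qk \<alpha> u x z \<le> 2 powr (real DIM('a) / \<alpha>) * t powr (- real DIM('a) / \<alpha>)"
proof -
  have "qk \<alpha> u x z \<le> u powr (- real DIM('a) / \<alpha>)"
    by (rule qk_le_powr)
  also have "\<dots> \<le> (t / 2) powr (- real DIM('a) / \<alpha>)"
    using assms by (intro powr_mono2') auto
  also have "\<dots> = 2 powr (real DIM('a) / \<alpha>) * t powr (- real DIM('a) / \<alpha>)"
    using assms by (simp add: powr_divide powr_minus divide_simps)
  finally show ?thesis .
qed

lemma qk_dichotomy:
  fixes x y z :: "'a::euclidean_space"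
  assumes "0 < \<alpha>" "0 < s" "s \<le> t / 2"
  shows "qk \<alpha> (t - s) x z \<le> 2 powr (real DIM('a) / \<alpha>) * 2 powr (real DIM('a) + \<alpha>) * qk \<alpha> t x y
    \<or> qk \<alpha> s z y \<le> 2 powr (real DIM('a) + \<alpha>) * (s / t) * qk \<alpha> t x y"
proof -
  let ?n = "real DIM('a)"
  let ?K\<^sub>1 = "(2::real) powr (?n / \<alpha>)" and ?K\<^sub>2 = "(2::real) powr (?n + \<alpha>)"
  define r where "r = norm (x - y)"
  have t: "0 < t" and u: "0 < t - s" "t - s \<le> t" "t \<le> 2 * (t - s)" using assms by auto
  have K: "1 \<le> ?K\<^sub>1" "1 \<le> ?K\<^sub>2" "0 \<le> qk \<alpha> t x y"
    using assms qk_pos[OF t] by (auto intro: ge_one_powr_ge_zero less_imp_le)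
  have KK: "?K\<^sub>1 \<le> ?K\<^sub>1 * ?K\<^sub>2" "?K\<^sub>2 \<le> ?K\<^sub>1 * ?K\<^sub>2"
    using K by (simp_all add: mult_le_cancel_left1 mult_le_cancel_right1)
  have big: "a \<le> ?K\<^sub>1 * ?K\<^sub>2 * qk \<alpha> t x y"
    if "a \<le> ?K\<^sub>1 * qk \<alpha> t x y \<or> a \<le> ?K\<^sub>2 * qk \<alpha> t x y" for a
    using that mult_right_mono[OF KK(1) K(3)] mult_right_mono[OF KK(2) K(3)] by (meson order_trans)
  show ?thesis
  proof (cases "r powr \<alpha> \<le> t")
    case True
    then have "qk \<alpha> (t - s) x z \<le> ?K\<^sub>1 * qk \<alpha> t x y"
      using qk_le_earlier_powr[OF assms(1) t u(3), of x z] qk_eq_powr[OF assms(1) t, of x y] t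
      unfolding r_def by simp
    then show ?thesis using big by blast
  next
    case False
    then have r: "0 < r" "x \<noteq> y" using t unfolding r_def by auto
    have J: "qk \<alpha> t x y = t / r powr (?n + \<alpha>)"
      using False r qk_eq_jump[OF assms(1) t, of x y] unfolding r_def by auto
    have "r \<le> norm (x - z) + norm (z - y)"
      unfolding r_def using norm_triangle_ineq[of "x - z" "z - y"] by simp
    then consider "r \<le> 2 * norm (x - z)" | "r \<le> 2 * norm (y - z)"
      by (fastforce simp: norm_minus_commute)
    then show ?thesis
    proof cases
      case 1
      have "qk \<alpha> (t - s) x z \<le> ?K\<^sub>2 * ((t - s) / r powr (?n + \<alpha>))"
        using qk_le_far[OF assms(1) _ r(1) 1] u by simp
      also have "\<dots> \<le> ?K\<^sub>2 * qk \<alpha> t x y"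
        unfolding J using u r by (intro mult_left_mono divide_right_mono) auto
      finally show ?thesis using big by auto
    next
      case 2
      have "qk \<alpha> s z y \<le> ?K\<^sub>2 * (s / r powr (?n + \<alpha>))"
        using qk_le_far[OF assms(1) _ r(1) 2, of s] assms qk_commute[of \<alpha> s y z] by simp
      also have "\<dots> = ?K\<^sub>2 * (s / t) * qk \<alpha> t x y"
        unfolding J using t by simp
      finally show ?thesis by simp
    qed
  qed
qed

text \<open>The time after which q(s,z,w) leaves its off-diagonal regime s/|z-w|^(d+\<alpha>), capped at t.\<close>
definition dist_time :: "real \<Rightarrow> real \<Rightarrow> 'a::euclidean_space \<Rightarrow> 'a \<Rightarrow> real" where
  "dist_time \<alpha> t z w = min (norm (z - w) powr \<alpha>) t"

lemma dist_time_nonneg: "0 < t \<Longrightarrow> 0 \<le> dist_time \<alpha> t z w"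
  unfolding dist_time_def by auto

lemma bfac_product_le:
  fixes z y :: "'a::euclidean_space"
  assumes "0 < \<alpha>" "0 < s" "s \<le> t / 2"
  shows "bfac \<alpha> D (t - s) z * bfac \<alpha> D s y
    \<le> 2 powr (1 / \<alpha>) * bfac \<alpha> D t y * (1 + (dist_time \<alpha> t z y / s) powr (1 / \<alpha>))"
proof -
  define b where "b = bfac \<alpha> D t y"
  define \<rho> where "\<rho> = norm (z - y)"
  have t: "0 < t" using assms by auto
  have two: "1 \<le> (2::real) powr (1 / \<alpha>)"
    using assms by (intro ge_one_powr_ge_zero) auto
  have b: "0 \<le> b" "0 \<le> bfac \<alpha> D s y" "bfac \<alpha> D s y \<le> 1" "bfac \<alpha> D (t - s) z \<le> 1"
    unfolding b_def by (auto intro: bfac_nonneg bfac_le_one)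
  have s_y: "bfac \<alpha> D s y \<le> (t / s) powr (1 / \<alpha>) * b"
    unfolding b_def using assms by (intro bfac_le_scaled) auto
  show ?thesis
  proof (cases "\<rho> powr \<alpha> \<le> t")
    case True
    have "bfac \<alpha> D (t - s) z \<le> (t / (t - s)) powr (1 / \<alpha>) * bfac \<alpha> D t z"
      using assms by (intro bfac_le_scaled) auto
    also have "\<dots> \<le> 2 powr (1 / \<alpha>) * (b + \<rho> / t powr (1 / \<alpha>))"
      using assms bfac_lipschitz[OF assms(1) t, of D z y] unfolding b_def \<rho>_def
      by (intro mult_mono powr_mono2) (auto simp: divide_simps bfac_nonneg)
    finally have "bfac \<alpha> D (t - s) z * bfac \<alpha> D s y
        \<le> 2 powr (1 / \<alpha>) * (b + \<rho> / t powr (1 / \<alpha>)) * bfac \<alpha> D s y"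
      using b by (intro mult_right_mono)
    also have "\<dots> = 2 powr (1 / \<alpha>) * (b * bfac \<alpha> D s y + \<rho> / t powr (1 / \<alpha>) * bfac \<alpha> D s y)"
      by (simp add: algebra_simps)
    also have "\<dots> \<le> 2 powr (1 / \<alpha>) * (b + \<rho> / t powr (1 / \<alpha>) * ((t / s) powr (1 / \<alpha>) * b))"
      using b s_y mult_left_le[of "bfac \<alpha> D s y" b] unfolding \<rho>_def
      by (intro mult_left_mono add_mono) auto
    also have "\<dots> = 2 powr (1 / \<alpha>) * b * (1 + (dist_time \<alpha> t z y / s) powr (1 / \<alpha>))"
      using True assms unfolding dist_time_def \<rho>_def
      by (simp add: powr_divide powr_powr algebra_simps)
    finally show ?thesis unfolding b_def .
  next
    case False
    have "bfac \<alpha> D (t - s) z * bfac \<alpha> D s y \<le> (t / s) powr (1 / \<alpha>) * b"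
      using b s_y mult_left_le_one_le[of "bfac \<alpha> D s y" "bfac \<alpha> D (t - s) z"] bfac_nonneg
      by (meson order_trans)
    also have "\<dots> \<le> 1 * (b * (1 + (t / s) powr (1 / \<alpha>)))"
      using b by (simp add: algebra_simps)
    also have "\<dots> \<le> 2 powr (1 / \<alpha>) * (b * (1 + (t / s) powr (1 / \<alpha>)))"
      using two b by (intro mult_right_mono) auto
    finally show ?thesis
      using False unfolding dist_time_def \<rho>_def b_def by (simp add: mult.assoc)
  qed
qed

lemma one_plus_powr_le:
  fixes M s \<gamma> :: real
  assumes "0 < \<alpha>" "0 \<le> M" "0 < s" "0 \<le> \<gamma>"
  shows "(1 + (M / s) powr (1 / \<alpha>)) powr \<gamma>
    \<le> 2 powr \<gamma> * (1 + (if s < M then (M / s) powr (\<gamma> / \<alpha>) else 0))"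
proof (cases "s < M")
  case True
  have "1 \<le> (M / s) powr (1 / \<alpha>)"
    using True assms by (intro ge_one_powr_ge_zero) auto
  then have "(1 + (M / s) powr (1 / \<alpha>)) powr \<gamma> \<le> (2 * (M / s) powr (1 / \<alpha>)) powr \<gamma>"
    using assms by (intro powr_mono2) auto
  also have "\<dots> = 2 powr \<gamma> * (M / s) powr (\<gamma> / \<alpha>)"
    using assms by (simp add: powr_mult powr_powr)
  also have "\<dots> \<le> 2 powr \<gamma> * (1 + (M / s) powr (\<gamma> / \<alpha>))"
    by simp
  finally show ?thesis using True by simp
next
  case False
  then have "(M / s) powr (1 / \<alpha>) \<le> 1"
    using assms by (intro powr_le1) auto
  then have "(1 + (M / s) powr (1 / \<alpha>)) powr \<gamma> \<le> 2 powr \<gamma>"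
    using assms by (intro powr_mono2) auto
  then show ?thesis using False by simp
qed

lemma rpow_bfac_product_le:
  fixes z y :: "'a::euclidean_space"
  assumes "0 < \<alpha>" "0 \<le> \<gamma>" "0 < s" "s \<le> t / 2"
  shows "rpow (bfac \<alpha> D (t - s) z) \<gamma> * rpow (bfac \<alpha> D s y) \<gamma>
    \<le> 2 powr (\<gamma> / \<alpha>) * 2 powr \<gamma> * rpow (bfac \<alpha> D t y) \<gamma> *
       (1 + (if s < dist_time \<alpha> t z y then (dist_time \<alpha> t z y / s) powr (\<gamma> / \<alpha>) else 0))"
proof -
  define V where "V = (dist_time \<alpha> t z y / s) powr (1 / \<alpha>)"
  have V: "0 \<le> V" unfolding V_def by simp
  have "rpow (bfac \<alpha> D (t - s) z) \<gamma> * rpow (bfac \<alpha> D s y) \<gamma>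
      = rpow (bfac \<alpha> D (t - s) z * bfac \<alpha> D s y) \<gamma>"
    by (simp add: rpow_mult bfac_nonneg)
  also have "\<dots> \<le> rpow (2 powr (1 / \<alpha>) * bfac \<alpha> D t y * (1 + V)) \<gamma>"
    unfolding V_def using assms
    by (intro rpow_mono mult_nonneg_nonneg bfac_nonneg bfac_product_le) auto
  also have "\<dots> = 2 powr (\<gamma> / \<alpha>) * rpow (bfac \<alpha> D t y) \<gamma> * (1 + V) powr \<gamma>"
    using V by (simp add: rpow_mult bfac_nonneg rpow_eq_powr powr_powr)
  also have "\<dots> \<le> 2 powr (\<gamma> / \<alpha>) * rpow (bfac \<alpha> D t y) \<gamma> *
      (2 powr \<gamma> * (1 + (if s < dist_time \<alpha> t z y then (dist_time \<alpha> t z y / s) powr (\<gamma> / \<alpha>) else 0)))"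
    unfolding V_def using assms dist_time_nonneg[of t]
    by (intro mult_left_mono one_plus_powr_le mult_nonneg_nonneg rpow_nonneg) auto
  finally show ?thesis by (simp add: algebra_simps)
qed

definition weighted_kernel :: "real \<Rightarrow> 'a::euclidean_space set \<Rightarrow> real \<Rightarrow> 'a \<Rightarrow> 'a \<Rightarrow> real \<Rightarrow> real" where
  "weighted_kernel \<alpha> D \<gamma> z w s = rpow (bfac \<alpha> D s z) \<gamma> * qk \<alpha> s z w"

definition kernel_excess ::
    "real \<Rightarrow> 'a::euclidean_space set \<Rightarrow> real \<Rightarrow> real \<Rightarrow> 'a \<Rightarrow> 'a \<Rightarrow> real \<Rightarrow> real" where
  "kernel_excess \<alpha> D \<gamma> t z w s =
    (if s < dist_time \<alpha> t z w
     then weighted_kernel \<alpha> D \<gamma> z w s * (dist_time \<alpha> t z w / s) powr (\<gamma> / \<alpha>) else 0)"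

definition threeP_ratio ::
    "real \<Rightarrow> 'a::euclidean_space set \<Rightarrow> real \<Rightarrow> real \<Rightarrow> 'a \<Rightarrow> 'a \<Rightarrow> 'a \<Rightarrow> real \<Rightarrow> real" where
  "threeP_ratio \<alpha> D \<gamma> t x y z s =
    psi \<alpha> D \<gamma> (t - s) x z * qk \<alpha> (t - s) x z * psi \<alpha> D \<gamma> s z y * qk \<alpha> s z y
      / (psi \<alpha> D \<gamma> t x y * qk \<alpha> t x y)"

definition threeP_const :: "real \<Rightarrow> real \<Rightarrow> real \<Rightarrow> real" where
  "threeP_const n \<alpha> \<gamma> =
    2 powr (n / \<alpha>) * 2 powr (n + \<alpha>) * 2 powr (\<gamma> / \<alpha>) * (2 powr (\<gamma> / \<alpha>) * 2 powr \<gamma>)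
    + 2 powr (n + \<alpha>) * 2 powr (\<gamma> / \<alpha>)"

lemma threeP_const_pos: "0 < threeP_const n \<alpha> \<gamma>"
  unfolding threeP_const_def by (intro add_pos_pos mult_pos_pos) auto

lemma weighted_kernel_nonneg: "0 < s \<Longrightarrow> 0 \<le> weighted_kernel \<alpha> D \<gamma> z w s"
  unfolding weighted_kernel_def by (simp add: rpow_nonneg qk_pos less_imp_le)

lemma kernel_excess_nonneg: "0 < s \<Longrightarrow> 0 \<le> kernel_excess \<alpha> D \<gamma> t z w s"
  unfolding kernel_excess_def by (simp add: weighted_kernel_nonneg)

lemma borel_measurable_weighted_kernel [measurable]:
  "weighted_kernel \<alpha> D \<gamma> z w \<in> borel_measurable borel"
  unfolding weighted_kernel_def by measurable

lemma borel_measurable_kernel_excess [measurable]: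
  "kernel_excess \<alpha> D \<gamma> t z w \<in> borel_measurable borel"
  unfolding kernel_excess_def by measurable

lemma threeP_ratio_swap: "threeP_ratio \<alpha> D \<gamma> t x y z s = threeP_ratio \<alpha> D \<gamma> t y x z (t - s)"
  unfolding threeP_ratio_def psi_def
  using qk_commute[of \<alpha> "t - s" x z] qk_commute[of \<alpha> s z y] qk_commute[of \<alpha> t x y]
  by (simp add: algebra_simps)

lemma rpow_bfac_le_double_time:
  assumes "0 < \<alpha>" "0 \<le> \<gamma>" "0 < u" "u \<le> t" "t \<le> 2 * u"
  shows "rpow (bfac \<alpha> D u x) \<gamma> \<le> 2 powr (\<gamma> / \<alpha>) * rpow (bfac \<alpha> D t x) \<gamma>"
proof -
  have "rpow (bfac \<alpha> D u x) \<gamma> \<le> (t / u) powr (\<gamma> / \<alpha>) * rpow (bfac \<alpha> D t x) \<gamma>"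
    using assms by (intro rpow_bfac_le_scaled) auto
  also have "\<dots> \<le> 2 powr (\<gamma> / \<alpha>) * rpow (bfac \<alpha> D t x) \<gamma>"
    using assms by (intro mult_right_mono powr_mono2 rpow_nonneg) (auto simp: divide_simps)
  finally show ?thesis .
qed

lemma mult4_mono:
  fixes p\<^sub>1 p\<^sub>2 p\<^sub>3 p\<^sub>4 q\<^sub>1 q\<^sub>2 q\<^sub>3 q\<^sub>4 :: real
  assumes "0 \<le> p\<^sub>1" "0 \<le> p\<^sub>2" "0 \<le> p\<^sub>3" "0 \<le> p\<^sub>4"
    "p\<^sub>1 \<le> q\<^sub>1" "p\<^sub>2 \<le> q\<^sub>2" "p\<^sub>3 \<le> q\<^sub>3" "p\<^sub>4 \<le> q\<^sub>4"
  shows "p\<^sub>1 * p\<^sub>2 * p\<^sub>3 * p\<^sub>4 \<le> q\<^sub>1 * q\<^sub>2 * q\<^sub>3 * q\<^sub>4"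
  using assms by (intro mult_mono) (auto intro: mult_nonneg_nonneg order_trans)

lemma threeP_numerator_le_near:
  fixes x y z :: "'a::euclidean_space"
  assumes "0 < \<alpha>" "0 \<le> \<gamma>" "0 < s" "s \<le> t / 2"
    and "qk \<alpha> (t - s) x z \<le> 2 powr (real DIM('a) / \<alpha>) * 2 powr (real DIM('a) + \<alpha>) * qk \<alpha> t x y"
  shows "psi \<alpha> D \<gamma> (t - s) x z * qk \<alpha> (t - s) x z * psi \<alpha> D \<gamma> s z y * qk \<alpha> s z y
    \<le> psi \<alpha> D \<gamma> t x y * qk \<alpha> t x y *
       (2 powr (real DIM('a) / \<alpha>) * 2 powr (real DIM('a) + \<alpha>) * 2 powr (\<gamma> / \<alpha>)
        * (2 powr (\<gamma> / \<alpha>) * 2 powr \<gamma>))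
       * (weighted_kernel \<alpha> D \<gamma> z y s + kernel_excess \<alpha> D \<gamma> t z y s)"
proof -
  let ?E = "1 + (if s < dist_time \<alpha> t z y then (dist_time \<alpha> t z y / s) powr (\<gamma> / \<alpha>) else 0)"
  have excess: "weighted_kernel \<alpha> D \<gamma> z y s * ?E
      = weighted_kernel \<alpha> D \<gamma> z y s + kernel_excess \<alpha> D \<gamma> t z y s"
    unfolding kernel_excess_def by (simp add: algebra_simps)
  have "psi \<alpha> D \<gamma> (t - s) x z * qk \<alpha> (t - s) x z * psi \<alpha> D \<gamma> s z y * qk \<alpha> s z y
      = rpow (bfac \<alpha> D (t - s) x) \<gamma> * (rpow (bfac \<alpha> D (t - s) z) \<gamma> * rpow (bfac \<alpha> D s y) \<gamma>)
        * qk \<alpha> (t - s) x z * weighted_kernel \<alpha> D \<gamma> z y s"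
    unfolding psi_def weighted_kernel_def by (simp add: algebra_simps)
  also have "\<dots> \<le> (2 powr (\<gamma> / \<alpha>) * rpow (bfac \<alpha> D t x) \<gamma>)
      * (2 powr (\<gamma> / \<alpha>) * 2 powr \<gamma> * rpow (bfac \<alpha> D t y) \<gamma> * ?E)
      * (2 powr (real DIM('a) / \<alpha>) * 2 powr (real DIM('a) + \<alpha>) * qk \<alpha> t x y)
      * weighted_kernel \<alpha> D \<gamma> z y s"
    using assms
    by (intro mult4_mono rpow_bfac_le_double_time rpow_bfac_product_le mult_nonneg_nonneg
        rpow_nonneg weighted_kernel_nonneg qk_pos[THEN less_imp_le]) auto
  also have "\<dots> = psi \<alpha> D \<gamma> t x y * qk \<alpha> t x y *
       (2 powr (real DIM('a) / \<alpha>) * 2 powr (real DIM('a) + \<alpha>) * 2 powr (\<gamma> / \<alpha>)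
        * (2 powr (\<gamma> / \<alpha>) * 2 powr \<gamma>))
       * (weighted_kernel \<alpha> D \<gamma> z y s + kernel_excess \<alpha> D \<gamma> t z y s)"
    unfolding psi_def excess[symmetric] by (simp add: algebra_simps)
  finally show ?thesis .
qed

lemma threeP_numerator_le_far:
  fixes x y z :: "'a::euclidean_space"
  assumes "0 < \<alpha>" "0 \<le> \<gamma>" "\<gamma> \<le> \<alpha>" "0 < s" "s \<le> t / 2"
    and "qk \<alpha> s z y \<le> 2 powr (real DIM('a) + \<alpha>) * (s / t) * qk \<alpha> t x y"
  shows "psi \<alpha> D \<gamma> (t - s) x z * qk \<alpha> (t - s) x z * psi \<alpha> D \<gamma> s z y * qk \<alpha> s z y
    \<le> psi \<alpha> D \<gamma> t x y * qk \<alpha> t x y * (2 powr (real DIM('a) + \<alpha>) * 2 powr (\<gamma> / \<alpha>))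
       * weighted_kernel \<alpha> D \<gamma> z x (t - s)"
proof -
  have t: "0 < t" using assms by auto
  have "(t / s) powr (\<gamma> / \<alpha>) * (s / t) \<le> (t / s) powr 1 * (s / t)"
    using assms by (intro mult_right_mono powr_mono) auto
  then have gain: "(t / s) powr (\<gamma> / \<alpha>) * (s / t) \<le> 1"
    using assms t by simp
  have "psi \<alpha> D \<gamma> (t - s) x z * qk \<alpha> (t - s) x z * psi \<alpha> D \<gamma> s z y * qk \<alpha> s z y
      = rpow (bfac \<alpha> D (t - s) x) \<gamma> * rpow (bfac \<alpha> D s y) \<gamma> * qk \<alpha> s z y
        * (rpow (bfac \<alpha> D s z) \<gamma> * weighted_kernel \<alpha> D \<gamma> z x (t - s))"
    unfolding psi_def weighted_kernel_def by (simp add: qk_commute[of \<alpha> _ x z] algebra_simps)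
  also have "\<dots> \<le> (2 powr (\<gamma> / \<alpha>) * rpow (bfac \<alpha> D t x) \<gamma>)
      * ((t / s) powr (\<gamma> / \<alpha>) * rpow (bfac \<alpha> D t y) \<gamma>)
      * (2 powr (real DIM('a) + \<alpha>) * (s / t) * qk \<alpha> t x y)
      * (1 * weighted_kernel \<alpha> D \<gamma> z x (t - s))"
    using assms
    by (intro mult4_mono mult_right_mono rpow_bfac_le_double_time rpow_bfac_le_scaled
        rpow_bfac_le_one mult_nonneg_nonneg rpow_nonneg weighted_kernel_nonneg
        qk_pos[THEN less_imp_le]) auto
  also have "\<dots> = psi \<alpha> D \<gamma> t x y * qk \<alpha> t x y * (2 powr (real DIM('a) + \<alpha>) * 2 powr (\<gamma> / \<alpha>))
      * weighted_kernel \<alpha> D \<gamma> z x (t - s) * ((t / s) powr (\<gamma> / \<alpha>) * (s / t))"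
    unfolding psi_def by (simp add: algebra_simps)
  also have "\<dots> \<le> psi \<alpha> D \<gamma> t x y * qk \<alpha> t x y * (2 powr (real DIM('a) + \<alpha>) * 2 powr (\<gamma> / \<alpha>))
      * weighted_kernel \<alpha> D \<gamma> z x (t - s)"
    using gain assms t unfolding psi_def
    by (intro mult_right_le_one_le mult_nonneg_nonneg rpow_nonneg weighted_kernel_nonneg
        qk_pos[THEN less_imp_le]) auto
  finally show ?thesis .
qed

lemma weighted_kernel_eq_before_dist_time:
  fixes z w :: "'a::euclidean_space"
  assumes "0 < \<alpha>" "0 < s" "s \<le> dist_time \<alpha> t z w" "z \<noteq> w"
  shows "weighted_kernel \<alpha> D \<gamma> z w s = rpow (bfac \<alpha> D s z) \<gamma> * (s / norm (z - w) powr (real DIM('a) + \<alpha>))"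
  using assms qk_eq_jump[OF assms(1,2,4)] unfolding weighted_kernel_def dist_time_def by simp

context
  fixes \<alpha> \<gamma> t M B g :: real and D :: "'a::euclidean_space set" and z w :: 'a
  assumes \<alpha>: "0 < \<alpha>" and \<gamma>: "0 \<le> \<gamma>"
    and M: "M = dist_time \<alpha> t z w" "0 < M"
    and B: "B = norm (z - w) powr (real DIM('a) + \<alpha>)"
    and g: "g = rpow (bfac \<alpha> D M z) \<gamma>"
begin

lemma dist_time_posD: "z \<noteq> w" "0 < B" "M \<le> t"
  using M B \<alpha> unfolding dist_time_def by auto

lemma kernel_excess_le_powr:
  assumes "0 < s" "s < M"
  shows "kernel_excess \<alpha> D \<gamma> t z w s \<le> g / B * M powr (2 * \<gamma> / \<alpha>) * s powr (1 - 2 * \<gamma> / \<alpha>)"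
proof -
  have "kernel_excess \<alpha> D \<gamma> t z w s = rpow (bfac \<alpha> D s z) \<gamma> * (s / B) * (M / s) powr (\<gamma> / \<alpha>)"
    using weighted_kernel_eq_before_dist_time[OF \<alpha> assms(1) _ dist_time_posD(1), of t D \<gamma>]
      assms M B by (simp add: kernel_excess_def)
  also have "\<dots> \<le> ((M / s) powr (\<gamma> / \<alpha>) * g) * (s / B) * (M / s) powr (\<gamma> / \<alpha>)"
    unfolding g using assms \<alpha> \<gamma> dist_time_posD
    by (intro mult_right_mono rpow_bfac_le_scaled) auto
  also have "\<dots> = g / B * M powr (2 * \<gamma> / \<alpha>) * s powr (1 - 2 * \<gamma> / \<alpha>)"
    using assms M(2) by (simp add: powr_divide powr_diff field_simps flip: powr_add)
  finally show ?thesis .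
qed

lemma nn_integral_kernel_excess_le:
  assumes "\<gamma> < \<alpha>"
  shows "(\<integral>\<^sup>+ s\<in>{0<..<t}. ennreal (kernel_excess \<alpha> D \<gamma> t z w s) \<partial>lborel)
    \<le> ennreal (g / B * M\<^sup>2 / (2 - 2 * \<gamma> / \<alpha>))"
proof -
  define p where "p = 1 - 2 * \<gamma> / \<alpha>"
  have p: "- 1 < p" "p + 1 = 2 - 2 * \<gamma> / \<alpha>"
    unfolding p_def using assms \<alpha> by (auto simp: field_simps)
  define c where "c = g / B * M powr (2 * \<gamma> / \<alpha>)"
  have c: "0 \<le> c" unfolding c_def g using dist_time_posD by (simp add: rpow_nonneg)
  have "(\<integral>\<^sup>+ s\<in>{0<..<t}. ennreal (kernel_excess \<alpha> D \<gamma> t z w s) \<partial>lborel)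
      \<le> (\<integral>\<^sup>+ s. ennreal (indicator {0..M} s * (c * s powr p)) \<partial>lborel)"
  proof (intro nn_integral_mono)
    fix s
    show "ennreal (kernel_excess \<alpha> D \<gamma> t z w s) * indicator {0<..<t} s
        \<le> ennreal (indicator {0..M} s * (c * s powr p))"
      using kernel_excess_le_powr[of s] unfolding c_def p_def
      by (cases "0 < s \<and> s < M")
        (auto simp: kernel_excess_def M(1)[symmetric] indicator_def intro!: ennreal_leI)
  qed
  also have "\<dots> = ennreal (c * (M powr (p + 1) / (p + 1)))"
    using c M p
    by (intro nn_integral_has_integral_lebesgue has_integral_mult_right has_integral_powr_from_0) auto
  also have "c * (M powr (p + 1) / (p + 1)) = g / B * M\<^sup>2 / (2 - 2 * \<gamma> / \<alpha>)"
    unfolding c_def p(2) using M(2) by (simp add: power2_eq_square flip: powr_add)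
  finally show ?thesis .
qed

lemma nn_integral_weighted_kernel_ge:
  "ennreal (g / B * M\<^sup>2 / 4) \<le> (\<integral>\<^sup>+ s\<in>{0<..<t}. ennreal (weighted_kernel \<alpha> D \<gamma> z w s) \<partial>lborel)"
proof -
  have "ennreal (g / B * M\<^sup>2 / 4) = (\<integral>\<^sup>+ s. ennreal (g * (M / 2 / B)) * indicator {M/2..<M} s \<partial>lborel)"
    using M(2) dist_time_posD g
    by (simp add: nn_integral_cmult_indicator rpow_nonneg power2_eq_square flip: ennreal_mult)
  also have "\<dots> \<le> (\<integral>\<^sup>+ s\<in>{0<..<t}. ennreal (weighted_kernel \<alpha> D \<gamma> z w s) \<partial>lborel)"
  proof (intro nn_integral_mono)
    fix s
    show "ennreal (g * (M / 2 / B)) * indicator {M/2..<M} s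
        \<le> ennreal (weighted_kernel \<alpha> D \<gamma> z w s) * indicator {0<..<t} s"
    proof (cases "s \<in> {M/2..<M}")
      case True
      then have s: "0 < s" "s < M" "M / 2 \<le> s" using M(2) by auto
      have "g * (M / 2 / B) \<le> rpow (bfac \<alpha> D s z) \<gamma> * (s / B)"
        unfolding g using s \<alpha> \<gamma> dist_time_posD
        by (intro mult_mono rpow_bfac_antimono divide_right_mono) (auto simp: rpow_nonneg)
      also have "\<dots> = weighted_kernel \<alpha> D \<gamma> z w s"
        using weighted_kernel_eq_before_dist_time[OF \<alpha> s(1) _ dist_time_posD(1), of t D \<gamma>]
          s M B by simp
      finally show ?thesis
        using True s dist_time_posD by (auto simp: indicator_def intro: ennreal_leI)
    qed auto
  qed
  finally show ?thesis .
qed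

end

lemma nn_integral_kernel_excess_le_weighted_kernel:
  fixes z w :: "'a::euclidean_space"
  assumes "0 < \<alpha>" "0 \<le> \<gamma>" "\<gamma> < \<alpha>"
  shows "(\<integral>\<^sup>+ s\<in>{0<..<t}. ennreal (kernel_excess \<alpha> D \<gamma> t z w s) \<partial>lborel)
    \<le> ennreal (4 / (2 - 2 * \<gamma> / \<alpha>)) * (\<integral>\<^sup>+ s\<in>{0<..<t}. ennreal (weighted_kernel \<alpha> D \<gamma> z w s) \<partial>lborel)"
proof (cases "0 < dist_time \<alpha> t z w")
  case True
  define M where "M = dist_time \<alpha> t z w"
  define B where "B = norm (z - w) powr (real DIM('a) + \<alpha>)"
  define g where "g = rpow (bfac \<alpha> D M z) \<gamma>"
  note facts = assms(1,2) M_def True[folded M_def] B_def g_def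
  have "2 - 2 * \<gamma> / \<alpha> > 0" using assms by (simp add: field_simps)
  then have "g / B * M\<^sup>2 / (2 - 2 * \<gamma> / \<alpha>) = 4 / (2 - 2 * \<gamma> / \<alpha>) * (g / B * M\<^sup>2 / 4)"
    by (simp add: field_simps)
  moreover have "0 \<le> g / B * M\<^sup>2 / 4"
    using True unfolding g_def B_def dist_time_def by (simp add: rpow_nonneg)
  ultimately have "(\<integral>\<^sup>+ s\<in>{0<..<t}. ennreal (kernel_excess \<alpha> D \<gamma> t z w s) \<partial>lborel)
      \<le> ennreal (4 / (2 - 2 * \<gamma> / \<alpha>)) * ennreal (g / B * M\<^sup>2 / 4)"
    using nn_integral_kernel_excess_le[OF facts assms(3)] \<open>2 - 2 * \<gamma> / \<alpha> > 0\<close>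
    by (simp add: mult.commute flip: ennreal_mult)
  also have "\<dots> \<le> ennreal (4 / (2 - 2 * \<gamma> / \<alpha>)) *
      (\<integral>\<^sup>+ s\<in>{0<..<t}. ennreal (weighted_kernel \<alpha> D \<gamma> z w s) \<partial>lborel)"
    by (intro mult_left_mono nn_integral_weighted_kernel_ge[OF facts]) auto
  finally show ?thesis .
next
  case False
  then have "kernel_excess \<alpha> D \<gamma> t z w s = 0" if "0 < s" for s
    using that unfolding kernel_excess_def by auto
  then have "(\<integral>\<^sup>+ s\<in>{0<..<t}. ennreal (kernel_excess \<alpha> D \<gamma> t z w s) \<partial>lborel)
      = (\<integral>\<^sup>+ (s::real). 0 \<partial>lborel)"
    by (intro nn_integral_cong) (auto simp: indicator_def)
  then show ?thesis by simp
qed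

lemma threeP_ratio_le_first_half:
  fixes x y z :: "'a::euclidean_space"
  assumes "0 < \<alpha>" "0 \<le> \<gamma>" "\<gamma> \<le> \<alpha>" "0 < s" "s \<le> t / 2"
  shows "threeP_ratio \<alpha> D \<gamma> t x y z s \<le> threeP_const (real DIM('a)) \<alpha> \<gamma> *
    (weighted_kernel \<alpha> D \<gamma> z y s + kernel_excess \<alpha> D \<gamma> t z y s + weighted_kernel \<alpha> D \<gamma> z x (t - s))"
proof -
  let ?K = "threeP_const (real DIM('a)) \<alpha> \<gamma>"
  let ?G\<^sub>1 = "weighted_kernel \<alpha> D \<gamma> z y s" and ?H\<^sub>1 = "kernel_excess \<alpha> D \<gamma> t z y s"
  let ?G\<^sub>2 = "weighted_kernel \<alpha> D \<gamma> z x (t - s)"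
  let ?den = "psi \<alpha> D \<gamma> t x y * qk \<alpha> t x y"
  have nonneg: "0 \<le> ?G\<^sub>1" "0 \<le> ?H\<^sub>1" "0 \<le> ?G\<^sub>2" "0 \<le> ?K" "0 \<le> ?den"
    using assms threeP_const_pos
    by (auto simp: weighted_kernel_nonneg kernel_excess_nonneg psi_def rpow_nonneg qk_pos less_imp_le)
  have bound: "?den * a * b \<le> ?den * (?K * (?G\<^sub>1 + ?H\<^sub>1 + ?G\<^sub>2))"
    if "0 \<le> a" "a \<le> ?K" "0 \<le> b" "b \<le> ?G\<^sub>1 + ?H\<^sub>1 + ?G\<^sub>2" for a b
  proof -
    have "a * b \<le> ?K * (?G\<^sub>1 + ?H\<^sub>1 + ?G\<^sub>2)"
      using that nonneg by (intro mult_mono) auto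
    then show ?thesis
      using mult_left_mono[OF _ nonneg(5)] by (simp only: mult.assoc)
  qed
  have "psi \<alpha> D \<gamma> (t - s) x z * qk \<alpha> (t - s) x z * psi \<alpha> D \<gamma> s z y * qk \<alpha> s z y
      \<le> ?den * (?K * (?G\<^sub>1 + ?H\<^sub>1 + ?G\<^sub>2))"
    using qk_dichotomy[OF assms(1,4,5), of x z y]
  proof
    assume "qk \<alpha> (t - s) x z \<le> 2 powr (real DIM('a) / \<alpha>) * 2 powr (real DIM('a) + \<alpha>) * qk \<alpha> t x y"
    from threeP_numerator_le_near[OF assms(1,2,4,5) this, where D = D]
    show ?thesis
      by (rule order_trans[OF _ bound]) (use nonneg in \<open>auto simp: threeP_const_def\<close>)
  next
    assume "qk \<alpha> s z y \<le> 2 powr (real DIM('a) + \<alpha>) * (s / t) * qk \<alpha> t x y"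
    from threeP_numerator_le_far[OF assms this, where D = D]
    show ?thesis
      by (rule order_trans[OF _ bound]) (use nonneg in \<open>auto simp: threeP_const_def\<close>)
  qed
  \<comment> \<open>if the denominator vanishes, the ratio is 0 by the convention x / 0 = 0\<close>
  then show ?thesis
    using nonneg unfolding threeP_ratio_def
    by (cases "?den = 0") (auto simp: divide_le_eq mult.commute)
qed

lemma threeP_ratio_le:
  fixes x y z :: "'a::euclidean_space"
  assumes "0 < \<alpha>" "0 \<le> \<gamma>" "\<gamma> \<le> \<alpha>" "0 < s" "s < t"
  shows "threeP_ratio \<alpha> D \<gamma> t x y z s \<le> threeP_const (real DIM('a)) \<alpha> \<gamma> *
    ((weighted_kernel \<alpha> D \<gamma> z y s + kernel_excess \<alpha> D \<gamma> t z y s)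
     + (weighted_kernel \<alpha> D \<gamma> z x (t - s) + kernel_excess \<alpha> D \<gamma> t z x (t - s)))"
proof -
  have nonneg: "0 \<le> kernel_excess \<alpha> D \<gamma> t z y s" "0 \<le> kernel_excess \<alpha> D \<gamma> t z x (t - s)"
    "0 \<le> threeP_const (real DIM('a)) \<alpha> \<gamma>"
    using assms threeP_const_pos by (auto simp: kernel_excess_nonneg less_imp_le)
  show ?thesis
  proof (cases "s \<le> t / 2")
    case True
    with threeP_ratio_le_first_half[OF assms(1-4) True, of D x y z] nonneg show ?thesis
      by (elim order_trans, intro mult_left_mono) auto
  next
    case False
    then have "0 < t - s" "t - s \<le> t / 2" using assms by auto
    from threeP_ratio_le_first_half[OF assms(1-3) this, of D y x z] nonneg show ?thesis
      unfolding threeP_ratio_swap[of \<alpha> D \<gamma> t x y z s]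
      by (elim order_trans, intro mult_left_mono) auto
  qed
qed

lemma nn_set_integral_reflect:
  fixes F :: "real \<Rightarrow> ennreal"
  assumes [measurable]: "F \<in> borel_measurable borel"
  shows "(\<integral>\<^sup>+ s\<in>{0<..<t}. F (t - s) \<partial>lborel) = (\<integral>\<^sup>+ s\<in>{0<..<t}. F s \<partial>lborel)"
proof -
  have "(\<integral>\<^sup>+ s\<in>{0<..<t}. F s \<partial>lborel)
      = (\<integral>\<^sup>+ s. F (t + -1 * s) * indicator {0<..<t} (t + -1 * s) \<partial>lborel)"
    using nn_integral_real_affine[of "\<lambda>s. F s * indicator {0<..<t} s" "-1" t] by simp
  also have "\<dots> = (\<integral>\<^sup>+ s\<in>{0<..<t}. F (t - s) \<partial>lborel)"
    by (intro nn_integral_cong) (auto simp: indicator_def)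
  finally show ?thesis by simp
qed

lemma nn_integral_kernel_sum_le:
  fixes z w :: "'a::euclidean_space"
  assumes "0 < \<alpha>" "0 \<le> \<gamma>" "\<gamma> < \<alpha>"
  shows "(\<integral>\<^sup>+ s\<in>{0<..<t}. ennreal (weighted_kernel \<alpha> D \<gamma> z w s + kernel_excess \<alpha> D \<gamma> t z w s) \<partial>lborel)
    \<le> ennreal (1 + 4 / (2 - 2 * \<gamma> / \<alpha>)) *
       (\<integral>\<^sup>+ s\<in>{0<..<t}. ennreal (weighted_kernel \<alpha> D \<gamma> z w s) \<partial>lborel)"
proof -
  let ?G = "\<integral>\<^sup>+ s\<in>{0<..<t}. ennreal (weighted_kernel \<alpha> D \<gamma> z w s) \<partial>lborel"
  have "(\<integral>\<^sup>+ s\<in>{0<..<t}. ennreal (weighted_kernel \<alpha> D \<gamma> z w s + kernel_excess \<alpha> D \<gamma> t z w s) \<partial>lborel)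
      = (\<integral>\<^sup>+ s\<in>{0<..<t}. (ennreal (weighted_kernel \<alpha> D \<gamma> z w s)
          + ennreal (kernel_excess \<alpha> D \<gamma> t z w s)) \<partial>lborel)"
    by (intro nn_integral_cong)
      (auto simp: indicator_def weighted_kernel_nonneg kernel_excess_nonneg ennreal_plus)
  also have "\<dots> = ?G + (\<integral>\<^sup>+ s\<in>{0<..<t}. ennreal (kernel_excess \<alpha> D \<gamma> t z w s) \<partial>lborel)"
    by (intro nn_set_integral_add) auto
  also have "\<dots> \<le> ?G + ennreal (4 / (2 - 2 * \<gamma> / \<alpha>)) * ?G"
    using nn_integral_kernel_excess_le_weighted_kernel[OF assms] by (rule add_left_mono)
  also have "\<dots> = ennreal (1 + 4 / (2 - 2 * \<gamma> / \<alpha>)) * ?G"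
  proof -
    have "0 < 2 - 2 * \<gamma> / \<alpha>" using assms by (simp add: field_simps)
    then have "0 \<le> 4 / (2 - 2 * \<gamma> / \<alpha>)" by simp
    then show ?thesis by (simp add: ennreal_plus[OF zero_le_one] distrib_right)
  qed
  finally show ?thesis .
qed

lemma nn_integral_threeP_ratio_le:
  fixes x y z :: "'a::euclidean_space"
  assumes "0 < \<alpha>" "0 \<le> \<gamma>" "\<gamma> < \<alpha>"
  defines "C \<equiv> threeP_const (real DIM('a)) \<alpha> \<gamma> * (1 + 4 / (2 - 2 * \<gamma> / \<alpha>))"
  shows "(\<integral>\<^sup>+ s\<in>{0<..<t}. ennreal (threeP_ratio \<alpha> D \<gamma> t x y z s) \<partial>lborel)
    \<le> ennreal C * (\<integral>\<^sup>+ s\<in>{0<..<t}. ennreal (rpow (bfac \<alpha> D s z) \<gamma> * (qk \<alpha> s x z + qk \<alpha> s z y)) \<partial>lborel)"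
proof -
  let ?K = "threeP_const (real DIM('a)) \<alpha> \<gamma>" and ?c = "1 + 4 / (2 - 2 * \<gamma> / \<alpha>)"
  let ?P = "\<lambda>w s. ennreal (weighted_kernel \<alpha> D \<gamma> z w s + kernel_excess \<alpha> D \<gamma> t z w s)"
  let ?G = "\<lambda>w. \<integral>\<^sup>+ s\<in>{0<..<t}. ennreal (weighted_kernel \<alpha> D \<gamma> z w s) \<partial>lborel"
  have K: "0 \<le> ?K" using threeP_const_pos less_imp_le by blast
  have "(\<integral>\<^sup>+ s\<in>{0<..<t}. ennreal (threeP_ratio \<alpha> D \<gamma> t x y z s) \<partial>lborel)
      \<le> (\<integral>\<^sup>+ s\<in>{0<..<t}. ennreal ?K * (?P y s + ?P x (t - s)) \<partial>lborel)"
  proof (intro nn_integral_mono)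
    fix s
    show "ennreal (threeP_ratio \<alpha> D \<gamma> t x y z s) * indicator {0<..<t} s
        \<le> ennreal ?K * (?P y s + ?P x (t - s)) * indicator {0<..<t} s"
    proof (cases "s \<in> {0<..<t}")
      case True
      then have "0 < s" "s < t" by auto
      then have "ennreal (threeP_ratio \<alpha> D \<gamma> t x y z s) \<le> ennreal ?K * (?P y s + ?P x (t - s))"
        using threeP_ratio_le[OF assms(1,2) less_imp_le[OF assms(3)], of s t D x y z] K
        by (simp add: weighted_kernel_nonneg kernel_excess_nonneg ennreal_leI
            flip: ennreal_plus ennreal_mult)
      then show ?thesis using True by simp
    qed simp
  qed
  also have "\<dots> = ennreal ?K * ((\<integral>\<^sup>+ s\<in>{0<..<t}. ?P y s \<partial>lborel) + (\<integral>\<^sup>+ s\<in>{0<..<t}. ?P x (t - s) \<partial>lborel))"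
    by (simp add: mult.assoc nn_integral_cmult nn_set_integral_add)
  also have "\<dots> = ennreal ?K * ((\<integral>\<^sup>+ s\<in>{0<..<t}. ?P y s \<partial>lborel) + (\<integral>\<^sup>+ s\<in>{0<..<t}. ?P x s \<partial>lborel))"
    by (subst nn_set_integral_reflect) auto
  also have "\<dots> \<le> ennreal ?K * (ennreal ?c * ?G y + ennreal ?c * ?G x)"
    using nn_integral_kernel_sum_le[OF assms(1-3)] by (intro mult_left_mono add_mono) auto
  also have "\<dots> = ennreal ?K * ennreal ?c * (?G x + ?G y)"
    by (simp add: algebra_simps)
  also have "ennreal ?K * ennreal ?c = ennreal C"
  proof -
    have "0 < 2 - 2 * \<gamma> / \<alpha>" using assms by (simp add: field_simps)
    then show ?thesis unfolding C_def using K by (simp add: ennreal_mult)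
  qed
  also have "?G x + ?G y
      = (\<integral>\<^sup>+ s\<in>{0<..<t}. ennreal (rpow (bfac \<alpha> D s z) \<gamma> * (qk \<alpha> s x z + qk \<alpha> s z y)) \<partial>lborel)"
    by (subst nn_set_integral_add[symmetric])
      (auto intro!: nn_integral_cong simp: indicator_def weighted_kernel_def qk_commute[of \<alpha> _ x z]
        distrib_left rpow_nonneg qk_pos less_imp_le ennreal_plus)
  finally show ?thesis .
qed

theorem lemma2p3:
  fixes \<alpha> \<gamma> :: real
  assumes "0 < \<alpha>" "\<alpha> < 2" "0 \<le> \<gamma>" "\<gamma> < \<alpha>"
  shows "\<exists>C>0. \<forall>(D :: 'a::euclidean_space set) t x y z.
           D \<in> sets borel \<longrightarrow> 0 < t \<longrightarrow> x \<in> D \<longrightarrow> y \<in> D \<longrightarrow> z \<in> D \<longrightarrow>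
           (\<integral>\<^sup>+ s \<in> {0<..<t}. ennreal
              (psi \<alpha> D \<gamma> (t - s) x z * qk \<alpha> (t - s) x z * psi \<alpha> D \<gamma> s z y * qk \<alpha> s z y
               / (psi \<alpha> D \<gamma> t x y * qk \<alpha> t x y)) \<partial>lborel)
           \<le> ennreal C * (\<integral>\<^sup>+ s \<in> {0<..<t}. ennreal
              (rpow (bfac \<alpha> D s z) \<gamma> * (qk \<alpha> s x z + qk \<alpha> s z y)) \<partial>lborel)"
proof (intro exI conjI allI impI)
  let ?C = "threeP_const (real DIM('a)) \<alpha> \<gamma> * (1 + 4 / (2 - 2 * \<gamma> / \<alpha>))"
  have "0 < 2 - 2 * \<gamma> / \<alpha>" using assms by (simp add: field_simps)
  then show "0 < ?C"
    by (intro mult_pos_pos add_pos_pos threeP_const_pos) auto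
  fix D :: "'a set" and t x y z
  show "(\<integral>\<^sup>+ s \<in> {0<..<t}. ennreal
              (psi \<alpha> D \<gamma> (t - s) x z * qk \<alpha> (t - s) x z * psi \<alpha> D \<gamma> s z y * qk \<alpha> s z y
               / (psi \<alpha> D \<gamma> t x y * qk \<alpha> t x y)) \<partial>lborel)
           \<le> ennreal ?C * (\<integral>\<^sup>+ s \<in> {0<..<t}. ennreal
              (rpow (bfac \<alpha> D s z) \<gamma> * (qk \<alpha> s x z + qk \<alpha> s z y)) \<partial>lborel)"
    using nn_integral_threeP_ratio_le[OF assms(1,3,4)] unfolding threeP_ratio_def .
qed

end
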